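(* Let $k$ be algebraically closed of characteristic zero and $q\in k^\times$ not a root of unity. If $a,b\in Sp_{2n}(k((t)))$ satisfy $b=c\,a\,\sigma_q(c)^{-1}$ for some $c\in GL_{2n}(k((t)))$, then $b=c'a\sigma_q(c')^{-1}$ for some $c'\in Sp_{2n}(k((t)))$. In other words, the natural map from $q$-conjugacy classes in $Sp_{2n}(k((t)))$ to $q$-conjugacy classes in $GL_{2n}(k((t)))$ is injective. The same holds for $O_n(k((t)))\subseteq GL_n(k((t)))$.
   Context: $\sigma_q(a(t))=a(qt)$, applied entrywise to matrices. $Sp_{2n}(k((t)))$ (resp. $O_n(k((t)))$) is the group of matrices preserving the $k((t))$-bilinear extension of a fixed nondegenerate symplectic form on $k^{2n}$ (resp. symmetric form on $k^n$). $q$-conjugation is $g\mapsto hg\sigma_q(h)^{-1}$. *)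

theory Defs
  imports "HOL-Computational_Algebra.Formal_Laurent_Series" "Jordan_Normal_Form.Determinant"
begin

text \<open>The q-dilation sigma_q on Laurent series: sigma_q(a(t)) = a(q t), i.e. the
  n-th coefficient gets multiplied by q^n (n an integer).\<close>
lift_definition sigma_q :: "'a::field \<Rightarrow> 'a fls \<Rightarrow> 'a fls" is
  "\<lambda>q f n. q powi n * f n"
proof -
  fix q :: 'a and f :: "int \<Rightarrow> 'a"
  assume "\<forall>\<^sub>\<infinity>n. f (- int n) = 0"
  then show "\<forall>\<^sub>\<infinity>n. q powi (- int n) * f (- int n) = 0"
    by (auto elim!: MOST_mono)
qed

definition sigma_mat :: "'a::field \<Rightarrow> 'a fls mat \<Rightarrow> 'a fls mat" where
  "sigma_mat q A = map_mat (sigma_q q) A"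

definition const_mat :: "'a::field mat \<Rightarrow> 'a fls mat" where
  "const_mat J = map_mat fls_const J"

definition GL :: "nat \<Rightarrow> 'a::field fls mat set" where
  "GL m = {c \<in> carrier_mat m m. invertible_mat c}"

definition symplectic_form :: "nat \<Rightarrow> 'a::field mat \<Rightarrow> bool" where
  "symplectic_form n J \<longleftrightarrow> J \<in> carrier_mat (2*n) (2*n) \<and> transpose_mat J = - J
     \<and> (\<forall>i<2*n. J $$ (i,i) = 0) \<and> det J \<noteq> 0"

definition symmetric_form :: "nat \<Rightarrow> 'a::field mat \<Rightarrow> bool" where
  "symmetric_form n S \<longleftrightarrow> S \<in> carrier_mat n n \<and> transpose_mat S = S \<and> det S \<noteq> 0"

text \<open>The group of matrices over k((t)) preserving the k((t))-bilinear extension of the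
  form with Gram matrix B (this is Sp or O depending on B).\<close>
definition isometry_group :: "'a::field mat \<Rightarrow> 'a fls mat set" where
  "isometry_group B = {g \<in> carrier_mat (dim_row B) (dim_row B).
      transpose_mat g * const_mat B * g = const_mat B}"

text \<open>b is q-conjugate to a by an element of G: b = c a sigma_q(c)^(-1) for some c in G
  (d is the inverse of sigma_q(c)).\<close>
definition q_conj_by :: "'a::field \<Rightarrow> 'a fls mat set \<Rightarrow> 'a fls mat \<Rightarrow> 'a fls mat \<Rightarrow> bool" where
  "q_conj_by q G a b \<longleftrightarrow> (\<exists>c\<in>G. \<exists>d \<in> carrier_mat (dim_row a) (dim_row a).
      sigma_mat q c * d = 1\<^sub>m (dim_row a) \<and> d * sigma_mat q c = 1\<^sub>m (dim_row a)
      \<and> b = c * a * d)"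

end

theory Submission
  imports Defs "Jordan_Normal_Form.Char_Poly"
begin

text \<open>
  Let B be the Gram matrix of a nondegenerate symmetric or alternating form, viewed over k((t)),
  and let a, b be isometries with b = c a sigma(c)^-1 for some invertible c.  Then x = c^T B c
  satisfies sigma(x) = a^T x a, so u = B^-1 x is invertible, self-adjoint for the form
  (u^T B = B u) and twisted-commutes with a (u a = a sigma(u)).  The latter makes sigma(u) similar
  to u, so the coefficients of the characteristic polynomial of u are sigma-invariant, hence lie
  in k because q is not a root of unity.  As k is algebraically closed of characteristic zero,
  X has a square root modulo every polynomial over k with nonzero constant term; with the
  Cayley-Hamilton theorem this yields a polynomial r over k with r(u)^2 = u.  The matrix y = r(u)
  inherits self-adjointness and twisted commutation from u, and c y^-1 is an isometry that
  q-conjugates a into b.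
\<close>

section \<open>The automorphism sigma_q of k((t))\<close>

lemma sigma_q_nth [simp]: "fls_nth (sigma_q q f) n = q powi n * fls_nth f n"
  by transfer simp

lemma sigma_q_zero [simp]: "sigma_q q 0 = 0"
  by (rule fls_eqI) simp

lemma sigma_q_subdegree:
  assumes "(q::'a::field) \<noteq> 0"
  shows "fls_subdegree (sigma_q q f) = fls_subdegree f"
proof (cases "f = 0")
  case True
  then show ?thesis by simp
next
  case False
  show ?thesis
    by (rule fls_subdegree_eqI) (use False assms in auto)
qed

lemma sigma_q_mult:
  assumes q: "(q::'a::field) \<noteq> 0"
  shows "sigma_q q (f * g) = sigma_q q f * sigma_q q g"
proof (rule fls_eqI)
  fix n
  show "fls_nth (sigma_q q (f * g)) n = fls_nth (sigma_q q f * sigma_q q g) n"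
    unfolding fls_times_nth(2)[of "sigma_q q f"] fls_times_nth(2)[of f] sigma_q_subdegree[OF q]
      sigma_q_nth sum_distrib_left
  proof (rule sum.cong[OF refl])
    fix i
    have "q powi n = q powi i * q powi (n - i)"
      using power_int_add[of q i "n - i"] q by simp
    then show "q powi n * (fls_nth f i * fls_nth g (n - i))
             = q powi i * fls_nth f i * (q powi (n - i) * fls_nth g (n - i))"
      by (simp add: algebra_simps)
  qed
qed

lemma sigma_q_add: "sigma_q (q::'a::field) (f + g) = sigma_q q f + sigma_q q g"
  by (rule fls_eqI) (simp add: algebra_simps)

lemma sigma_q_one: "sigma_q (q::'a::field) 1 = 1"
  by (rule fls_eqI) simp

lemma sigma_q_hom:
  assumes "(q::'a::field) \<noteq> 0"
  shows "comm_ring_hom (sigma_q q)"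
  by unfold_locales (simp_all add: sigma_q_add sigma_q_one sigma_q_mult[OF assms])

lemma sigma_q_const [simp]: "sigma_q q (fls_const c) = fls_const c"
  by (rule fls_eqI) simp

text \<open>If q is not a root of unity, the fixed field of sigma_q is k: the n-th coefficient of a
  fixed series is multiplied by q^n \<noteq> 1 for n \<noteq> 0, so it vanishes.\<close>
lemma sigma_q_fixed_const:
  assumes q: "(q::'a::field) \<noteq> 0" and not_root: "\<forall>m::nat. m > 0 \<longrightarrow> q ^ m \<noteq> 1"
    and fixed: "sigma_q q f = f"
  shows "f = fls_const (fls_nth f 0)"
proof (rule fls_eqI)
  fix n :: int
  show "fls_nth f n = fls_nth (fls_const (fls_nth f 0)) n"
  proof (cases "n = 0")
    case False
    have "q powi n \<noteq> 1"
    proof (cases "n > 0")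
      case True
      then show ?thesis using not_root by (simp add: power_int_def)
    next
      case False
      with \<open>n \<noteq> 0\<close> have "q powi n = inverse (q ^ nat (- n))"
        by (simp add: power_int_def power_inverse)
      moreover have "q ^ nat (- n) \<noteq> 1" using not_root False \<open>n \<noteq> 0\<close> by simp
      ultimately show ?thesis by (metis inverse_1 inverse_inverse_eq)
    qed
    moreover have "q powi n * fls_nth f n = fls_nth f n"
      using fixed by (metis sigma_q_nth)
    ultimately show ?thesis using False by (metis mult_cancel_right2 fls_const_nth)
  qed simp
qed

lemma fls_const_hom: "comm_ring_hom (fls_const :: 'a::field \<Rightarrow> 'a fls)"
  by unfold_locales (auto intro: fls_eqI)

lemma mult_carrier_square [simp]:
  "X \<in> carrier_mat n n \<Longrightarrow> Y \<in> carrier_mat n n \<Longrightarrow> X * Y \<in> carrier_mat n n"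
  by (rule mult_carrier_mat)

lemma smult_one_mat [simp]: "(1::'a::semiring_1) \<cdot>\<^sub>m A = A"
  by (rule eq_matI) auto

lemma smult_zero_left_mat [simp]: "(0::'a::semiring_1) \<cdot>\<^sub>m A = 0\<^sub>m (dim_row A) (dim_col A)"
  by (rule eq_matI) auto

lemma smult_smult_mat: "(a::'a::semiring_1) \<cdot>\<^sub>m (b \<cdot>\<^sub>m A) = (a * b) \<cdot>\<^sub>m A"
  by (rule eq_matI) (auto simp: mult.assoc)

lemma smult_one_left_mat:
  "X \<in> carrier_mat n m \<Longrightarrow> (c \<cdot>\<^sub>m 1\<^sub>m n) * X = (c::'a::comm_semiring_1) \<cdot>\<^sub>m X"
  by (simp add: mult_smult_assoc_mat[of "1\<^sub>m n" n n X m] left_mult_one_mat)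

lemma smult_one_right_mat:
  "X \<in> carrier_mat m n \<Longrightarrow> X * (c \<cdot>\<^sub>m 1\<^sub>m n) = (c::'a::comm_semiring_1) \<cdot>\<^sub>m X"
  by (simp add: mult_smult_distrib[of X m n "1\<^sub>m n" n] right_mult_one_mat)

lemma transpose_smult_mat [simp]: "transpose_mat (c \<cdot>\<^sub>m A) = c \<cdot>\<^sub>m transpose_mat A"
  by (rule eq_matI) auto

definition inverse_pair :: "nat \<Rightarrow> 'a::semiring_1 mat \<Rightarrow> 'a mat \<Rightarrow> bool" where
  "inverse_pair n P Q \<longleftrightarrow>
     P \<in> carrier_mat n n \<and> Q \<in> carrier_mat n n \<and> P * Q = 1\<^sub>m n \<and> Q * P = 1\<^sub>m n"

lemma inverse_pairI:
  assumes "(P :: 'a::field mat) \<in> carrier_mat n n" "Q \<in> carrier_mat n n" "P * Q = 1\<^sub>m n"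
  shows "inverse_pair n P Q"
  using assms mat_mult_left_right_inverse[OF assms] by (simp add: inverse_pair_def)

lemma inverse_pair_sym: "inverse_pair n P Q \<Longrightarrow> inverse_pair n Q P"
  by (auto simp: inverse_pair_def)

lemma inverse_pair_cancel_left:
  assumes "inverse_pair n P Q" and "Z \<in> carrier_mat n m"
  shows "Q * (P * Z) = Z"
  using assms by (simp add: inverse_pair_def assoc_mult_mat[of Q n n P n Z m, symmetric])

lemma inverse_pair_cancel_right:
  assumes "inverse_pair n P Q" and "Z \<in> carrier_mat m n"
  shows "Z * P * Q = Z"
  using assms by (simp add: inverse_pair_def assoc_mult_mat[of Z m n P n Q n])

lemma inverse_pair_mult:
  assumes PP': "inverse_pair n P P'" and QQ': "inverse_pair n Q Q'"
  shows "inverse_pair n (P * Q) (Q' * P')"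
proof -
  have carr: "P \<in> carrier_mat n n" "P' \<in> carrier_mat n n" "Q \<in> carrier_mat n n" "Q' \<in> carrier_mat n n"
    using assms by (auto simp: inverse_pair_def)
  have "P * Q * (Q' * P') = P * (Q * (Q' * P'))"
    using carr by (simp add: assoc_mult_mat[of _ n n _ n _ n])
  also have "\<dots> = 1\<^sub>m n"
    using inverse_pair_cancel_left[OF inverse_pair_sym[OF QQ'], of P' n] PP' by (simp add: inverse_pair_def)
  finally have right: "P * Q * (Q' * P') = 1\<^sub>m n" .
  have "Q' * P' * (P * Q) = Q' * (P' * (P * Q))"
    using carr by (simp add: assoc_mult_mat[of _ n n _ n _ n])
  also have "\<dots> = 1\<^sub>m n"
    using inverse_pair_cancel_left[OF PP', of Q n] QQ' carr by (simp add: inverse_pair_def)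
  finally show ?thesis using right carr by (simp add: inverse_pair_def)
qed

lemma inverse_pair_transpose:
  assumes PQ: "inverse_pair n (P :: 'a::comm_semiring_1 mat) Q"
  shows "inverse_pair n (transpose_mat P) (transpose_mat Q)"
proof -
  have P: "P \<in> carrier_mat n n" and Q: "Q \<in> carrier_mat n n"
    using PQ by (auto simp: inverse_pair_def)
  have "transpose_mat P * transpose_mat Q = transpose_mat (Q * P)"
    by (rule transpose_mult[OF Q P, symmetric])
  moreover have "transpose_mat Q * transpose_mat P = transpose_mat (P * Q)"
    by (rule transpose_mult[OF P Q, symmetric])
  ultimately show ?thesis using PQ by (simp add: inverse_pair_def)
qed

lemma inverse_pair_unique:
  assumes "inverse_pair n P Q" and "inverse_pair n P Q'"
  shows "Q = Q'"
proof -
  have "Q = Q * (P * Q')" using assms by (auto simp: inverse_pair_def)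
  also have "\<dots> = Q'" using inverse_pair_cancel_left[OF assms(1), of Q' n] assms(2)
    by (simp add: inverse_pair_def)
  finally show ?thesis .
qed

lemma det_nonzero_inverse_pair:
  assumes A: "(A :: 'a::field mat) \<in> carrier_mat n n" and det: "det A \<noteq> 0"
  obtains Ai where "inverse_pair n A Ai"
proof
  have "A * (inverse (det A) \<cdot>\<^sub>m adj_mat A) = 1\<^sub>m n"
    using det by (simp add: mult_smult_distrib[OF A adj_mat(1)[OF A]] adj_mat(2)[OF A] smult_smult_mat)
  then show "inverse_pair n A (inverse (det A) \<cdot>\<^sub>m adj_mat A)"
    using A adj_mat(1)[OF A] by (intro inverse_pairI) auto
qed

lemma GL_inverse_pair:
  assumes "c \<in> GL n"
  obtains ci where "inverse_pair n c ci"
proof -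
  from assms obtain X where c: "c \<in> carrier_mat n n"
    and X1: "c * X = 1\<^sub>m (dim_row c)" and X2: "X * c = 1\<^sub>m (dim_row X)"
    unfolding GL_def invertible_mat_def inverts_mat_def by auto
  have "X \<in> carrier_mat n n"
    using arg_cong[OF X1, of dim_col] arg_cong[OF X2, of dim_col] c by (intro carrier_matI) auto
  with c X1 X2 have "inverse_pair n c X" by (simp add: inverse_pair_def)
  then show ?thesis by (rule that)
qed

section \<open>Evaluating polynomials at square matrices\<close>

definition mat_eval :: "nat \<Rightarrow> 'a::comm_ring_1 poly \<Rightarrow> 'a mat \<Rightarrow> 'a mat" where
  "mat_eval n p A = foldr (\<lambda>c M. c \<cdot>\<^sub>m 1\<^sub>m n + A * M) (coeffs p) (0\<^sub>m n n)"

lemma mat_eval_0 [simp]: "mat_eval n 0 A = 0\<^sub>m n n"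
  by (simp add: mat_eval_def)

lemma mat_eval_pCons:
  assumes A: "A \<in> carrier_mat n n"
  shows "mat_eval n (pCons a p) A = a \<cdot>\<^sub>m 1\<^sub>m n + A * mat_eval n p A"
proof (cases "p = 0 \<and> a = 0")
  case True
  then show ?thesis using A by (auto simp: mat_eval_def)
next
  case False
  then have "coeffs (pCons a p) = a # coeffs p"
    by (auto simp: cCons_def)
  then show ?thesis by (simp add: mat_eval_def)
qed

lemma mat_eval_carrier [simp]:
  assumes A: "A \<in> carrier_mat n n"
  shows "mat_eval n p A \<in> carrier_mat n n"
  by (induct p rule: pCons_induct) (auto simp: mat_eval_pCons[OF A] A)

lemma mat_eval_dim [simp]:
  assumes "A \<in> carrier_mat n n"
  shows "dim_row (mat_eval n p A) = n" "dim_col (mat_eval n p A) = n"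
  using mat_eval_carrier[OF assms, of p] by auto

lemma mat_eval_add:
  assumes A: "A \<in> carrier_mat n n"
  shows "mat_eval n (p + q) A = mat_eval n p A + mat_eval n q A"
proof (induct p arbitrary: q rule: pCons_induct)
  case 0
  then show ?case using A by simp
next
  case (pCons a p)
  obtain b q' where q: "q = pCons b q'" by (cases q) auto
  have "mat_eval n (pCons a p + q) A
        = (a + b) \<cdot>\<^sub>m 1\<^sub>m n + (A * mat_eval n p A + A * mat_eval n q' A)"
    using pCons A by (simp add: q mat_eval_pCons[OF A] mult_add_distrib_mat[of A n n _ n])
  also have "\<dots> = (a \<cdot>\<^sub>m 1\<^sub>m n + A * mat_eval n p A) + (b \<cdot>\<^sub>m 1\<^sub>m n + A * mat_eval n q' A)"
    by (rule eq_matI) (use A in \<open>auto simp: algebra_simps\<close>)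
  also have "\<dots> = mat_eval n (pCons a p) A + mat_eval n q A"
    by (simp add: q mat_eval_pCons[OF A])
  finally show ?case .
qed

lemma mat_eval_smult:
  assumes A: "A \<in> carrier_mat n n"
  shows "mat_eval n (Polynomial.smult c p) A = c \<cdot>\<^sub>m mat_eval n p A"
  by (induct p rule: pCons_induct)
    (use A in \<open>simp_all add: mat_eval_pCons[OF A] add_smult_distrib_left_mat[of _ n n]
       mult_smult_distrib[OF A mat_eval_carrier[OF A]] smult_smult_mat\<close>)

lemma mat_eval_mult:
  assumes A: "A \<in> carrier_mat n n"
  shows "mat_eval n (p * q) A = mat_eval n p A * mat_eval n q A"
proof (induct p rule: pCons_induct)
  case 0
  then show ?case using A by (simp add: left_mult_zero_mat[of _ n n])
next
  case (pCons a p)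
  note carr = A mat_eval_carrier[OF A]
  have "mat_eval n (pCons a p * q) A
        = mat_eval n (Polynomial.smult a q) A + mat_eval n (pCons 0 (p * q)) A"
    by (simp add: mat_eval_add[OF A])
  also have "\<dots> = a \<cdot>\<^sub>m mat_eval n q A + A * (mat_eval n p A * mat_eval n q A)"
    using pCons A by (simp add: mat_eval_smult[OF A] mat_eval_pCons[OF A])
  also have "\<dots> = (a \<cdot>\<^sub>m 1\<^sub>m n + A * mat_eval n p A) * mat_eval n q A"
    using carr by (simp add: add_mult_distrib_mat[of _ n n _ _ n] smult_one_left_mat[OF carr(2)]
      assoc_mult_mat[of A n n _ n _ n])
  also have "\<dots> = mat_eval n (pCons a p) A * mat_eval n q A"
    by (simp add: mat_eval_pCons[OF A])
  finally show ?case .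
qed

lemma mat_eval_one [simp]: "A \<in> carrier_mat n n \<Longrightarrow> mat_eval n 1 A = 1\<^sub>m n"
  by (simp add: one_pCons mat_eval_pCons)

lemma mat_eval_X [simp]: "A \<in> carrier_mat n n \<Longrightarrow> mat_eval n [:0,1:] A = A"
  by (simp add: mat_eval_pCons)

lemma pow_mat_Suc_left:
  assumes A: "A \<in> carrier_mat n n"
  shows "A * A ^\<^sub>m i = A ^\<^sub>m Suc i"
proof (induct i)
  case (Suc i)
  have "A * A ^\<^sub>m Suc i = (A * A ^\<^sub>m i) * A"
    using A by (simp add: assoc_mult_mat[OF A pow_carrier_mat[OF A] A])
  then show ?case using Suc by simp
qed (use A in simp)

lemma mat_eval_power:
  assumes A: "A \<in> carrier_mat n n"
  shows "mat_eval n (p ^ m) A = mat_eval n p A ^\<^sub>m m"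
  by (induct m) (simp_all add: A mat_eval_mult[OF A] pow_mat_Suc_left[OF mat_eval_carrier[OF A]]
    del: pow_mat.simps(2))

text \<open>p(A) commutes with A, since p X = X p.\<close>
lemma mat_eval_comm:
  assumes A: "A \<in> carrier_mat n n"
  shows "mat_eval n p A * A = A * mat_eval n p A"
  using mat_eval_mult[OF A, of p "[:0,1:]"] mat_eval_mult[OF A, of "[:0,1:]" p] A
  by (simp add: mult.commute)

section \<open>The Cayley-Hamilton theorem\<close>

fun mat_sum :: "nat \<Rightarrow> (nat \<Rightarrow> 'a::semiring_1 mat) \<Rightarrow> nat \<Rightarrow> 'a mat" where
  "mat_sum n f 0 = 0\<^sub>m n n"
| "mat_sum n f (Suc D) = mat_sum n f D + f D"

lemma mat_sum_carrier [simp]: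
  "(\<And>i. f i \<in> carrier_mat n n) \<Longrightarrow> mat_sum n f D \<in> carrier_mat n n"
  by (induct D) auto

lemma mat_sum_cong:
  "(\<And>i. i < D \<Longrightarrow> f i = g i) \<Longrightarrow> mat_sum n f D = mat_sum n g D"
  by (induct D) auto

lemma mat_sum_zero:
  "(\<And>i. i < D \<Longrightarrow> f i = 0\<^sub>m n n) \<Longrightarrow> mat_sum n f D = 0\<^sub>m n n"
  by (induct D) auto

lemma mat_sum_shift:
  assumes f: "\<And>i. f i \<in> carrier_mat n n"
  shows "mat_sum n f (Suc D) = f 0 + mat_sum n (\<lambda>i. f (Suc i)) D"
proof (induct D)
  case (Suc D)
  have "mat_sum n f (Suc (Suc D)) = (f 0 + mat_sum n (\<lambda>i. f (Suc i)) D) + f (Suc D)"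
    using Suc by simp
  also have "\<dots> = f 0 + (mat_sum n (\<lambda>i. f (Suc i)) D + f (Suc D))"
    by (rule assoc_add_mat[of _ n n]) (use f in auto)
  finally show ?case by simp
qed (use f[of 0] in simp)

lemma mat_sum_mult_left:
  assumes A: "A \<in> carrier_mat n n" and f: "\<And>i. f i \<in> carrier_mat n n"
  shows "A * mat_sum n f D = mat_sum n (\<lambda>i. A * f i) D"
  by (induct D) (use A in \<open>simp_all add: mult_add_distrib_mat[OF A mat_sum_carrier[OF f] f]\<close>)

lemma mat_sum_add:
  assumes f: "\<And>i. f i \<in> carrier_mat n n" and g: "\<And>i. g i \<in> carrier_mat n n"
  shows "mat_sum n (\<lambda>i. f i + g i) D = mat_sum n f D + mat_sum n g D"
proof (induct D)
  case 0
  then show ?case by simp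
next
  case (Suc D)
  have F: "mat_sum n f D \<in> carrier_mat n n" and G: "mat_sum n g D \<in> carrier_mat n n"
    using f g by simp_all
  have "mat_sum n (\<lambda>i. f i + g i) (Suc D) = (mat_sum n f D + mat_sum n g D) + (f D + g D)"
    using Suc by simp
  also have "\<dots> = (mat_sum n f D + f D) + (mat_sum n g D + g D)"
    by (rule eq_matI) (use F G f[of D] g[of D] in \<open>auto simp: ac_simps\<close>)
  finally show ?case by simp
qed

lemma mat_sum_uminus:
  assumes f: "\<And>i. (f i :: 'a::comm_ring_1 mat) \<in> carrier_mat n n"
  shows "mat_sum n (\<lambda>i. - f i) D = - mat_sum n f D"
proof (induct D)
  case 0
  then show ?case by (rule eq_matI) auto
next
  case (Suc D)
  have F: "mat_sum n f D \<in> carrier_mat n n" using f by simp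
  have "mat_sum n (\<lambda>i. - f i) (Suc D) = - mat_sum n f D + - f D" using Suc by simp
  also have "\<dots> = - (mat_sum n f D + f D)"
    by (rule eq_matI) (use F f[of D] in auto)
  finally show ?case by simp
qed

lemma mat_eval_as_sum:
  assumes A: "A \<in> carrier_mat n n" and high: "\<forall>i\<ge>D. coeff p i = 0"
  shows "mat_eval n p A = mat_sum n (\<lambda>i. coeff p i \<cdot>\<^sub>m A ^\<^sub>m i) D"
  using high
proof (induct p arbitrary: D rule: pCons_induct)
  case 0
  show ?case by (simp, rule mat_sum_zero[symmetric]) (use A in auto)
next
  case (pCons a p)
  show ?case
  proof (cases D)
    case 0
    with pCons have "pCons a p = 0" by (simp add: poly_eq_iff)
    with pCons show ?thesis by simp
  next
    case (Suc D')
    have "\<forall>i\<ge>D'. coeff p i = 0" using pCons(3) Suc by auto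
    then have "mat_eval n (pCons a p) A
               = a \<cdot>\<^sub>m 1\<^sub>m n + A * mat_sum n (\<lambda>i. coeff p i \<cdot>\<^sub>m A ^\<^sub>m i) D'"
      using pCons(2) by (simp add: mat_eval_pCons[OF A])
    also have "A * mat_sum n (\<lambda>i. coeff p i \<cdot>\<^sub>m A ^\<^sub>m i) D'
               = mat_sum n (\<lambda>i. coeff p i \<cdot>\<^sub>m A ^\<^sub>m Suc i) D'"
      by (subst mat_sum_mult_left[OF A])
        (use A in \<open>auto simp: mult_smult_distrib[OF A pow_carrier_mat[OF A]] pow_mat_Suc_left[OF A]
           simp del: pow_mat.simps\<close>)
    also have "a \<cdot>\<^sub>m 1\<^sub>m n + mat_sum n (\<lambda>i. coeff p i \<cdot>\<^sub>m A ^\<^sub>m Suc i) D'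
               = mat_sum n (\<lambda>i. coeff (pCons a p) i \<cdot>\<^sub>m A ^\<^sub>m i) D"
      unfolding Suc by (subst mat_sum_shift) (use A in \<open>auto simp del: pow_mat.simps(2)\<close>)
    finally show ?thesis .
  qed
qed

text \<open>A matrix with polynomial entries, read as a polynomial with matrix coefficients: the i-th
  coefficient matrix, and the evaluation at A with A multiplied from the left,
  \<Sum>_{i<D} A^i P_i.\<close>
definition coeff_mat :: "'a::zero poly mat \<Rightarrow> nat \<Rightarrow> 'a mat" where
  "coeff_mat P i = map_mat (\<lambda>p. coeff p i) P"

definition left_eval :: "nat \<Rightarrow> 'a::comm_ring_1 mat \<Rightarrow> 'a poly mat \<Rightarrow> nat \<Rightarrow> 'a mat" where
  "left_eval n A P D = mat_sum n (\<lambda>i. A ^\<^sub>m i * coeff_mat P i) D"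

lemma coeff_mat_carrier [simp]: "P \<in> carrier_mat n m \<Longrightarrow> coeff_mat P i \<in> carrier_mat n m"
  by (simp add: coeff_mat_def)

lemma left_eval_carrier [simp]:
  "A \<in> carrier_mat n n \<Longrightarrow> P \<in> carrier_mat n n \<Longrightarrow> left_eval n A P D \<in> carrier_mat n n"
  unfolding left_eval_def by (rule mat_sum_carrier) simp

lemma coeff_mat_vanish:
  assumes P: "P \<in> carrier_mat n n"
  obtains D where "D \<ge> n" and "\<And>i. i \<ge> D \<Longrightarrow> coeff_mat P i = 0\<^sub>m n n"
proof
  define D where "D = n + (\<Sum>j<n. \<Sum>l<n. Suc (degree (P $$ (j,l))))"
  show "D \<ge> n" unfolding D_def by simp
  fix i assume i: "i \<ge> D"
  have "coeff (P $$ (j,l)) i = 0" if "j < n" "l < n" for j l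
  proof (rule coeff_eq_0)
    have "Suc (degree (P $$ (j,l))) \<le> (\<Sum>l<n. Suc (degree (P $$ (j,l))))"
      by (rule member_le_sum) (use that in auto)
    also have "\<dots> \<le> (\<Sum>j<n. \<Sum>l<n. Suc (degree (P $$ (j,l))))"
      by (rule member_le_sum[where f = "\<lambda>j. \<Sum>l<n. Suc (degree (P $$ (j,l)))"]) (use that in auto)
    finally show "degree (P $$ (j,l)) < i" using i unfolding D_def by simp
  qed
  then show "coeff_mat P i = 0\<^sub>m n n"
    by (intro eq_matI) (use P in \<open>auto simp: coeff_mat_def\<close>)
qed

lemma left_eval_add:
  assumes A: "A \<in> carrier_mat n n" and P: "P \<in> carrier_mat n n" and Q: "Q \<in> carrier_mat n n"
  shows "left_eval n A (P + Q) D = left_eval n A P D + left_eval n A Q D"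
proof -
  have "coeff_mat (P + Q) i = coeff_mat P i + coeff_mat Q i" for i
    by (rule eq_matI) (use P Q in \<open>auto simp: coeff_mat_def\<close>)
  then have "A ^\<^sub>m i * coeff_mat (P + Q) i = A ^\<^sub>m i * coeff_mat P i + A ^\<^sub>m i * coeff_mat Q i" for i
    using mult_add_distrib_mat[OF pow_carrier_mat[OF A] coeff_mat_carrier[OF P] coeff_mat_carrier[OF Q]]
    by simp
  then show ?thesis
    unfolding left_eval_def using A P Q by (simp add: mat_sum_add[of _ n])
qed

lemma left_eval_X:
  assumes A: "A \<in> carrier_mat n n" and P: "P \<in> carrier_mat n n"
  shows "left_eval n A ([:0,1:] \<cdot>\<^sub>m P) (Suc D) = A * left_eval n A P D"
proof -
  have c0: "coeff_mat ([:0,1:] \<cdot>\<^sub>m P) 0 = 0\<^sub>m n n"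
    and cS: "\<And>i. coeff_mat ([:0,1:] \<cdot>\<^sub>m P) (Suc i) = coeff_mat P i"
    by (auto intro!: eq_matI simp: coeff_mat_def) (use P in auto)
  have shift: "A ^\<^sub>m Suc i * coeff_mat P i = A * (A ^\<^sub>m i * coeff_mat P i)" for i
    by (simp add: pow_mat_Suc_left[OF A, symmetric] assoc_mult_mat[of A n n _ n _ n] A P
        del: pow_mat.simps)
  have "left_eval n A ([:0,1:] \<cdot>\<^sub>m P) (Suc D)
        = A ^\<^sub>m 0 * coeff_mat ([:0,1:] \<cdot>\<^sub>m P) 0
          + mat_sum n (\<lambda>i. A ^\<^sub>m Suc i * coeff_mat ([:0,1:] \<cdot>\<^sub>m P) (Suc i)) D"
    unfolding left_eval_def by (rule mat_sum_shift) (use A P in auto)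
  also have "\<dots> = mat_sum n (\<lambda>i. A * (A ^\<^sub>m i * coeff_mat P i)) D"
    unfolding c0 cS shift using A P by (simp del: pow_mat.simps)
  also have "\<dots> = A * left_eval n A P D"
    unfolding left_eval_def by (rule mat_sum_mult_left[symmetric]) (use A P in auto)
  finally show ?thesis .
qed

lemma left_eval_const:
  assumes A: "A \<in> carrier_mat n n" and P: "P \<in> carrier_mat n n"
  shows "left_eval n A (map_mat (\<lambda>a. [:-a:]) A * P) D = - (A * left_eval n A P D)"
proof -
  have coeff: "coeff_mat (map_mat (\<lambda>a. [:-a:]) A * P) i = - (A * coeff_mat P i)" for i
    by (rule eq_matI) (use A P in \<open>auto simp: coeff_mat_def scalar_prod_def coeff_sum sum_negf\<close>)
  have "A ^\<^sub>m i * coeff_mat (map_mat (\<lambda>a. [:-a:]) A * P) i = - (A * (A ^\<^sub>m i * coeff_mat P i))" for i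
    unfolding coeff using A P
    by (simp add: pow_mat_Suc_left[OF A] assoc_mult_mat[OF A pow_carrier_mat[OF A] coeff_mat_carrier[OF P], symmetric]
        assoc_mult_mat[OF pow_carrier_mat[OF A] A coeff_mat_carrier[OF P], symmetric])
  then have "left_eval n A (map_mat (\<lambda>a. [:-a:]) A * P) D
             = mat_sum n (\<lambda>i. - (A * (A ^\<^sub>m i * coeff_mat P i))) D"
    unfolding left_eval_def by simp
  also have "\<dots> = - mat_sum n (\<lambda>i. A * (A ^\<^sub>m i * coeff_mat P i)) D"
    by (rule mat_sum_uminus) (use A P in auto)
  also have "\<dots> = - (A * left_eval n A P D)"
    unfolding left_eval_def by (subst mat_sum_mult_left[OF A]) (use A P in auto)
  finally show ?thesis .
qed

text \<open>The key identity: left evaluation at A kills every left multiple of X - A.\<close>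
lemma left_eval_char_poly_matrix:
  assumes A: "A \<in> carrier_mat n n" and P: "P \<in> carrier_mat n n"
    and top: "coeff_mat P D = 0\<^sub>m n n"
  shows "left_eval n A (char_poly_matrix A * P) (Suc D) = 0\<^sub>m n n"
proof -
  have stable: "left_eval n A P (Suc D) = left_eval n A P D"
    unfolding left_eval_def using top A P by simp
  have "char_poly_matrix A * P = [:0,1:] \<cdot>\<^sub>m P + map_mat (\<lambda>a. [:-a:]) A * P"
    unfolding char_poly_matrix_def using A P
    by (simp add: add_mult_distrib_mat[of _ n n _ _ n] smult_one_left_mat[OF P])
  then have "left_eval n A (char_poly_matrix A * P) (Suc D)
             = A * left_eval n A P D + - (A * left_eval n A P D)"
    using A P by (simp add: left_eval_add left_eval_X left_eval_const stable)
  also have "\<dots> = 0\<^sub>m n n"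
    using comm_add_mat[OF mult_carrier_mat[OF A left_eval_carrier[OF A P]] uminus_carrier_mat] A P
    by simp
  finally show ?thesis .
qed

text \<open>Cayley-Hamilton: (X - A) adj(X - A) = chi_A(X) I as polynomial matrices; left evaluation
  at A kills the left-hand side and turns the right-hand side into chi_A(A).\<close>
theorem cayley_hamilton:
  assumes A: "(A :: 'a::comm_ring_1 mat) \<in> carrier_mat n n"
  shows "mat_eval n (char_poly A) A = 0\<^sub>m n n"
proof -
  define Adj where "Adj = adj_mat (char_poly_matrix A)"
  have Adj: "Adj \<in> carrier_mat n n"
    unfolding Adj_def using adj_mat(1) A char_poly_matrix_closed by blast
  have MAdj: "char_poly_matrix A * Adj = char_poly A \<cdot>\<^sub>m 1\<^sub>m n"
    unfolding Adj_def char_poly_def using adj_mat(2) A char_poly_matrix_closed by blast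
  obtain D where "D \<ge> n" and vanish: "\<And>i. i \<ge> D \<Longrightarrow> coeff_mat Adj i = 0\<^sub>m n n"
    using coeff_mat_vanish[OF Adj] by blast
  have "\<forall>i\<ge>Suc D. coeff (char_poly A) i = 0"
    using \<open>D \<ge> n\<close> degree_monic_char_poly[OF A] by (auto intro: coeff_eq_0)
  then have "mat_eval n (char_poly A) A = mat_sum n (\<lambda>i. coeff (char_poly A) i \<cdot>\<^sub>m A ^\<^sub>m i) (Suc D)"
    by (rule mat_eval_as_sum[OF A])
  also have "\<dots> = left_eval n A (char_poly A \<cdot>\<^sub>m 1\<^sub>m n) (Suc D)"
    unfolding left_eval_def
  proof (rule mat_sum_cong)
    fix i
    have "coeff_mat (char_poly A \<cdot>\<^sub>m 1\<^sub>m n) i = coeff (char_poly A) i \<cdot>\<^sub>m 1\<^sub>m n"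
      by (rule eq_matI) (auto simp: coeff_mat_def)
    then show "coeff (char_poly A) i \<cdot>\<^sub>m A ^\<^sub>m i = A ^\<^sub>m i * coeff_mat (char_poly A \<cdot>\<^sub>m 1\<^sub>m n) i"
      using A by (simp add: smult_one_right_mat[of _ n n] del: pow_mat.simps)
  qed
  also have "\<dots> = 0\<^sub>m n n"
    unfolding MAdj[symmetric] by (rule left_eval_char_poly_matrix[OF A Adj vanish]) simp
  finally show ?thesis .
qed

section \<open>Square roots of X modulo a polynomial\<close>

text \<open>Hensel-type lifting step: a square root of X modulo p extends to one modulo (X - l) p for
  any l \<noteq> 0.  Over an algebraically closed field of characteristic zero this only requires
  solving a quadratic (or linear) equation for the correction term.\<close>
lemma sqrt_X_mod_lift:
  fixes p :: "'k::{alg_closed_field, field_char_0} poly"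
  assumes l: "l \<noteq> 0" and root: "p dvd r^2 - [:0,1:]"
  shows "\<exists>r'. [:-l,1:] * p dvd r'^2 - [:0,1:]"
proof -
  obtain h where h: "r^2 - [:0,1:] = p * h" using root by (auto elim: dvdE)
  have at_l: "poly r l ^ 2 - l = poly p l * poly h l"
    using arg_cong[OF h, of "\<lambda>f. poly f l"] by simp
  obtain s where s: "poly h l + 2 * s * poly r l + s^2 * poly p l = 0"
  proof (cases "poly p l = 0")
    case True
    then have "poly r l \<noteq> 0" using at_l l by auto
    then have "poly h l + 2 * (- poly h l / (2 * poly r l)) * poly r l
               + (- poly h l / (2 * poly r l))^2 * poly p l = 0"
      using True by (simp add: field_simps)
    then show ?thesis by (rule that)
  next
    case False
    then have "degree [:poly h l, 2 * poly r l, poly p l:] = 2" by simp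
    then obtain s where "poly [:poly h l, 2 * poly r l, poly p l:] s = 0"
      using alg_closed_imp_poly_has_root[of "[:poly h l, 2 * poly r l, poly p l:]"] by auto
    then have "poly h l + 2 * s * poly r l + s^2 * poly p l = 0"
      by (simp add: algebra_simps power2_eq_square)
    then show ?thesis by (rule that)
  qed
  define g where "g = h + 2 * Polynomial.smult s r + Polynomial.smult (s^2) p"
  have "poly g l = 0" using s unfolding g_def by (simp add: algebra_simps)
  then obtain g' where g': "g = [:-l,1:] * g'" by (metis dvdE poly_eq_0_iff_dvd)
  have "(r + Polynomial.smult s p)^2 - [:0,1:]
        = (r^2 - [:0,1:]) + 2 * Polynomial.smult s (r * p) + Polynomial.smult (s^2) (p * p)"
    by (simp add: power2_eq_square algebra_simps smult_add_right)
  also have "\<dots> = p * g"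
    unfolding h g_def by (simp add: algebra_simps)
  also have "\<dots> = [:-l,1:] * p * g'"
    unfolding g' by (simp only: ac_simps)
  finally show ?thesis by (metis dvdI)
qed

lemma sqrt_X_mod:
  fixes p :: "'k::{alg_closed_field, field_char_0} poly"
  assumes "poly p 0 \<noteq> 0"
  shows "\<exists>r. p dvd r^2 - [:0,1:]"
  using assms
proof (induct "degree p" arbitrary: p rule: less_induct)
  case less
  have p0: "p \<noteq> 0" using less(2) by auto
  show ?case
  proof (cases "degree p = 0")
    case True
    then have "is_unit p" using p0 by (simp add: is_unit_iff_degree)
    then show ?thesis using unit_imp_dvd by blast
  next
    case False
    then obtain l where l: "poly p l = 0" using alg_closed_imp_poly_has_root by blast
    then obtain p' where p: "p = [:-l,1:] * p'" by (metis dvdE poly_eq_0_iff_dvd)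
    have "p' \<noteq> 0" using p0 p by auto
    then have "degree p' < degree p" unfolding p by (subst degree_mult_eq) auto
    moreover have "poly p' 0 \<noteq> 0" using less(2) p by simp
    ultimately obtain r where "p' dvd r^2 - [:0,1:]" using less(1) by blast
    moreover have "l \<noteq> 0" using l less(2) by auto
    ultimately show ?thesis unfolding p by (rule sqrt_X_mod_lift[rotated])
  qed
qed

section \<open>Square roots of invertible matrices\<close>

lemma invertible_pow_cancel:
  assumes u: "inverse_pair n u ui" and Z: "Z \<in> carrier_mat n n"
    and zero: "u ^\<^sub>m m * Z = 0\<^sub>m n n"
  shows "Z = (0\<^sub>m n n :: 'a::semiring_1 mat)"
  using Z zero
proof (induct m arbitrary: Z)
  case (Suc m)
  have uc: "u \<in> carrier_mat n n" using u by (simp add: inverse_pair_def)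
  have "u ^\<^sub>m m * (u * Z) = 0\<^sub>m n n"
    using Suc(2,3) uc by (simp add: assoc_mult_mat[of _ n n _ n _ n])
  then have "u * Z = 0\<^sub>m n n" using Suc(1)[of "u * Z"] uc Suc(2) by simp
  then show ?case
    using inverse_pair_cancel_left[OF u Suc(2)] u by (auto simp: inverse_pair_def)
qed (use u in \<open>auto simp: inverse_pair_def\<close>)

text \<open>An invertible matrix whose characteristic polynomial comes from a polynomial over an
  algebraically closed field of characteristic zero has a square root that is a polynomial in it:
  write that polynomial as X^m p1 with p1(0) \<noteq> 0; by Cayley-Hamilton and invertibility p1(u) = 0,
  and a square root r of X modulo p1 gives r(u)^2 = u.\<close>
lemma invertible_mat_sqrt:
  fixes h :: "'k::{alg_closed_field, field_char_0} \<Rightarrow> 'a::comm_ring_1"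
  assumes hom: "comm_ring_hom h" and u: "inverse_pair n u ui"
    and chi: "char_poly u = map_poly h p"
  obtains r where "mat_eval n (map_poly h r) u * mat_eval n (map_poly h r) u = u"
proof -
  interpret H: map_poly_comm_ring_hom h
    using hom by (simp add: map_poly_comm_ring_hom_def)
  have uc: "u \<in> carrier_mat n n" using u by (simp add: inverse_pair_def)
  have "p \<noteq> 0" using degree_monic_char_poly[OF uc] chi by auto
  then obtain p1 m where p: "p = [:0, 1:] ^ m * p1" and "\<not> [:- 0, 1:] dvd p1"
    using order_decomp[of p 0] by auto
  then have "poly p1 0 \<noteq> 0" by (simp add: poly_eq_0_iff_dvd)
  then obtain r where "p1 dvd r^2 - [:0,1:]" using sqrt_X_mod by blast
  then obtain g where "r^2 - [:0,1:] = p1 * g" by (auto elim: dvdE)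
  then have rg: "r * r = [:0,1:] + p1 * g" by (simp add: power2_eq_square algebra_simps)
  have X: "map_poly h [:0,1:] = [:0,1:]" by simp
  have "u ^\<^sub>m m * mat_eval n (map_poly h p1) u = mat_eval n (char_poly u) u"
    unfolding chi p by (simp add: H.hom_mult H.hom_power mat_eval_mult[OF uc] mat_eval_power[OF uc] X mat_eval_X[OF uc])
  also have "\<dots> = 0\<^sub>m n n" by (rule cayley_hamilton[OF uc])
  finally have p1u: "mat_eval n (map_poly h p1) u = 0\<^sub>m n n"
    by (rule invertible_pow_cancel[OF u, rotated]) (simp add: uc)
  have "mat_eval n (map_poly h r) u * mat_eval n (map_poly h r) u = mat_eval n (map_poly h (r * r)) u"
    by (simp add: H.hom_mult mat_eval_mult[OF uc])
  also have "\<dots> = u"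
    unfolding rg using uc
    by (simp add: H.hom_mult H.hom_add mat_eval_mult[OF uc] mat_eval_add[OF uc] X mat_eval_X[OF uc] p1u
        left_mult_zero_mat[of _ n n])
  finally show ?thesis by (rule that)
qed

section \<open>sigma_q on matrices and twisted commutation\<close>

lemma sigma_mat_carrier [simp]: "(sigma_mat q A \<in> carrier_mat nr nc) = (A \<in> carrier_mat nr nc)"
  by (simp add: sigma_mat_def)

lemma sigma_mat_mult:
  assumes q: "q \<noteq> 0" and A: "A \<in> carrier_mat nr n" and B: "B \<in> carrier_mat n nc"
  shows "sigma_mat q (A * B) = sigma_mat q A * sigma_mat q B"
proof -
  interpret comm_ring_hom "sigma_q q" by (rule sigma_q_hom[OF q])
  show ?thesis unfolding sigma_mat_def by (rule mat_hom_mult[OF A B])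
qed

lemma sigma_mat_zero [simp]: "sigma_mat q (0\<^sub>m n m) = 0\<^sub>m n m"
  by (rule eq_matI) (auto simp: sigma_mat_def)

lemma sigma_mat_one [simp]: "sigma_mat q (1\<^sub>m n) = 1\<^sub>m n"
  by (rule eq_matI) (auto simp: sigma_mat_def sigma_q_one)

lemma sigma_mat_const [simp]: "sigma_mat q (const_mat B) = const_mat B"
  by (rule eq_matI) (auto simp: sigma_mat_def const_mat_def)

lemma sigma_mat_transpose: "sigma_mat q (transpose_mat A) = transpose_mat (sigma_mat q A)"
  by (rule eq_matI) (auto simp: sigma_mat_def)

lemma sigma_mat_add:
  "A \<in> carrier_mat nr nc \<Longrightarrow> B \<in> carrier_mat nr nc \<Longrightarrow>
   sigma_mat q (A + B) = sigma_mat q A + sigma_mat q B"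
  by (rule eq_matI) (auto simp: sigma_mat_def sigma_q_add)

lemma sigma_mat_smult_const: "sigma_mat q (fls_const c \<cdot>\<^sub>m A) = fls_const c \<cdot>\<^sub>m sigma_mat q A"
  by (rule eq_matI) (auto simp: sigma_mat_def intro!: fls_eqI)

lemma inverse_pair_sigma:
  assumes "q \<noteq> 0" and "inverse_pair n P Q"
  shows "inverse_pair n (sigma_mat q P) (sigma_mat q Q)"
proof -
  have P: "P \<in> carrier_mat n n" and Q: "Q \<in> carrier_mat n n"
    using assms(2) by (auto simp: inverse_pair_def)
  show ?thesis
    using assms(2) unfolding inverse_pair_def
    by (simp add: sigma_mat_mult[OF assms(1) P Q, symmetric] sigma_mat_mult[OF assms(1) Q P, symmetric])
qed

text \<open>u twisted-commutes with a if u a = a sigma(u).  This relation passes from u to every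
  polynomial in u with coefficients in k, since sigma fixes those coefficients.\<close>
lemma mat_eval_twisted:
  fixes u a :: "'k::field fls mat"
  assumes q: "q \<noteq> 0" and u: "u \<in> carrier_mat N N" and a: "a \<in> carrier_mat N N"
    and ua: "u * a = a * sigma_mat q u"
  shows "mat_eval N (map_poly fls_const p) u * a = a * sigma_mat q (mat_eval N (map_poly fls_const p) u)"
proof (induct p rule: pCons_induct)
  case 0
  then show ?case using a by simp
next
  case (pCons c p)
  define Y where "Y = mat_eval N (map_poly fls_const p) u"
  have Y: "Y \<in> carrier_mat N N" unfolding Y_def using u by simp
  have IH: "Y * a = a * sigma_mat q Y" using pCons(2) unfolding Y_def .
  have eval: "mat_eval N (map_poly fls_const (pCons c p)) u = fls_const c \<cdot>\<^sub>m 1\<^sub>m N + u * Y"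
    unfolding Y_def using pCons(1) by (subst map_poly_pCons) (simp_all add: mat_eval_pCons[OF u])
  note carr = u Y a sigma_mat_carrier[THEN iffD2, OF Y] sigma_mat_carrier[THEN iffD2, OF u]
  have "(fls_const c \<cdot>\<^sub>m 1\<^sub>m N + u * Y) * a = fls_const c \<cdot>\<^sub>m a + u * (Y * a)"
    using carr by (simp add: add_mult_distrib_mat[of _ N N _ _ N] smult_one_left_mat)
  also have "u * (Y * a) = a * (sigma_mat q u * sigma_mat q Y)"
    unfolding IH using carr by (simp add: assoc_mult_mat[symmetric, of u N N a N _ N] ua)
  also have "fls_const c \<cdot>\<^sub>m a + a * (sigma_mat q u * sigma_mat q Y)
             = a * sigma_mat q (fls_const c \<cdot>\<^sub>m 1\<^sub>m N + u * Y)"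
    using carr
    by (simp add: sigma_mat_add[of _ N N] sigma_mat_smult_const sigma_mat_mult[OF q u Y]
        mult_add_distrib_mat[of a N N _ N] smult_one_right_mat)
  finally show ?case unfolding eval .
qed

lemma mat_eval_self_adjoint:
  fixes u B :: "'a::comm_ring_1 mat"
  assumes u: "u \<in> carrier_mat N N" and B: "B \<in> carrier_mat N N"
    and uB: "transpose_mat u * B = B * u"
  shows "transpose_mat (mat_eval N p u) * B = B * mat_eval N p u"
proof (induct p rule: pCons_induct)
  case 0
  then show ?case using B by simp
next
  case (pCons c p)
  define Y where "Y = mat_eval N p u"
  have Y: "Y \<in> carrier_mat N N" unfolding Y_def using u by simp
  have IH: "transpose_mat Y * B = B * Y" using pCons(2) unfolding Y_def .
  have comm: "Y * u = u * Y" unfolding Y_def by (rule mat_eval_comm[OF u])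
  have "transpose_mat (c \<cdot>\<^sub>m 1\<^sub>m N + u * Y) = c \<cdot>\<^sub>m 1\<^sub>m N + transpose_mat Y * transpose_mat u"
    using u Y by (simp add: transpose_add[of _ N N] transpose_mult[of u N N Y N])
  then have "transpose_mat (c \<cdot>\<^sub>m 1\<^sub>m N + u * Y) * B
             = c \<cdot>\<^sub>m B + transpose_mat Y * (transpose_mat u * B)"
    using u Y B by (simp add: add_mult_distrib_mat[of _ N N _ _ N] smult_one_left_mat)
  also have "\<dots> = c \<cdot>\<^sub>m B + B * (u * Y)"
    using u Y B by (simp add: uB assoc_mult_mat[symmetric, of "transpose_mat Y" N N B N u N] IH
      comm[symmetric])
  also have "\<dots> = B * (c \<cdot>\<^sub>m 1\<^sub>m N + u * Y)"
    using u Y B by (simp add: mult_add_distrib_mat[of B N N _ N] smult_one_right_mat)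
  finally show ?case unfolding Y_def by (simp add: mat_eval_pCons[OF u])
qed

text \<open>If u twisted-commutes with an invertible a, then sigma(u) = a^-1 u a is similar to u, so
  the coefficients of the characteristic polynomial of u are sigma-fixed, i.e. lie in k.\<close>
lemma char_poly_twisted_const:
  fixes q :: "'k::field"
  assumes q: "q \<noteq> 0" and not_root: "\<forall>m::nat. m > 0 \<longrightarrow> q ^ m \<noteq> 1"
    and a: "inverse_pair N a ai" and u: "u \<in> carrier_mat N N"
    and ua: "u * a = a * sigma_mat q u"
  obtains p where "char_poly u = map_poly fls_const p"
proof
  interpret S: comm_ring_hom "sigma_q q" by (rule sigma_q_hom[OF q])
  have carr: "a \<in> carrier_mat N N" "ai \<in> carrier_mat N N" using a by (auto simp: inverse_pair_def)
  have "sigma_mat q u = ai * (a * sigma_mat q u)"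
    using inverse_pair_cancel_left[OF a, of "sigma_mat q u"] u by simp
  also have "\<dots> = ai * u * a"
    using carr u by (simp add: ua assoc_mult_mat[of _ N N _ N _ N])
  finally have "similar_mat (sigma_mat q u) u"
    using a u by (intro similar_matI[of _ _ ai a N]) (auto simp: inverse_pair_def)
  then have "char_poly (sigma_mat q u) = char_poly u" by (rule char_poly_similar)
  then have fixed: "map_poly (sigma_q q) (char_poly u) = char_poly u"
    using S.char_poly_hom[OF u] unfolding sigma_mat_def by simp
  show "char_poly u = map_poly fls_const (map_poly (\<lambda>f. fls_nth f 0) (char_poly u))"
  proof (rule poly_eqI)
    fix i
    have "sigma_q q (coeff (char_poly u) i) = coeff (char_poly u) i"
      using arg_cong[OF fixed, of "\<lambda>p. coeff p i"] by (simp add: coeff_map_poly)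
    then show "coeff (char_poly u) i = coeff (map_poly fls_const (map_poly (\<lambda>f. fls_nth f 0) (char_poly u))) i"
      using sigma_q_fixed_const[OF q not_root] by (simp add: coeff_map_poly)
  qed
qed

lemma isometry_inverse_pair:
  assumes G: "inverse_pair N G Gi" and a: "(a :: 'a::field mat) \<in> carrier_mat N N"
    and iso: "transpose_mat a * G * a = G"
  shows "inverse_pair N a (Gi * transpose_mat a * G)"
proof -
  have carr: "G \<in> carrier_mat N N" "Gi \<in> carrier_mat N N"
    using G by (auto simp: inverse_pair_def)
  have "Gi * transpose_mat a * G * a = Gi * (transpose_mat a * G * a)"
    using carr a by (simp add: assoc_mult_mat[of _ N N _ N _ N])
  also have "\<dots> = 1\<^sub>m N" using iso G by (simp add: inverse_pair_def)
  finally show ?thesis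
    using carr a by (intro inverse_pair_sym[OF inverse_pairI]) auto
qed

lemma sigma_conjugated_gram:
  assumes q: "q \<noteq> 0" and G: "G \<in> carrier_mat N N" and sG: "sigma_mat q G = G"
    and a: "a \<in> carrier_mat N N" and c: "c \<in> carrier_mat N N" and d: "d \<in> carrier_mat N N"
    and b_iso: "transpose_mat (c * a * d) * G * (c * a * d) = G"
    and dc: "d * sigma_mat q c = 1\<^sub>m N"
  shows "sigma_mat q (transpose_mat c * G * c) = transpose_mat a * (transpose_mat c * G * c) * a"
proof -
  define x where "x = transpose_mat c * G * c"
  define sc where "sc = sigma_mat q c"
  have x: "x \<in> carrier_mat N N" and sc: "sc \<in> carrier_mat N N"
    unfolding x_def sc_def using G c by auto
  note simps = assoc_mult_mat[of _ N N _ N _ N] transpose_mult[of _ N N _ N]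
  have "transpose_mat d * (transpose_mat a * x * a) * d = transpose_mat (c * a * d) * G * (c * a * d)"
    using G a c d by (simp add: x_def simps)
  then have G_eq: "G = transpose_mat d * (transpose_mat a * x * a) * d"
    using b_iso by simp
  have "sigma_mat q x = transpose_mat sc * G * sc"
    unfolding x_def sc_def using G c
    by (simp add: sigma_mat_mult[OF q, of _ N N _ N] sigma_mat_transpose sG)
  also have "\<dots> = transpose_mat (d * sc) * (transpose_mat a * x * a) * (d * sc)"
    by (subst G_eq) (use a d x sc in \<open>simp add: simps\<close>)
  also have "\<dots> = transpose_mat a * x * a"
    using dc a x by (simp add: sc_def)
  finally show ?thesis unfolding x_def .
qed

text \<open>With x as above, u = G^-1 x twisted-commutes with a: u a = a sigma(u).  Here G is fixed
  by sigma, and so is its inverse.\<close>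
lemma twisted_of_gram:
  fixes G :: "'a::field fls mat"
  assumes q: "q \<noteq> 0" and G: "inverse_pair N G Gi" and sG: "sigma_mat q G = G"
    and a: "a \<in> carrier_mat N N" and iso: "transpose_mat a * G * a = G"
    and x: "x \<in> carrier_mat N N" and sx: "sigma_mat q x = transpose_mat a * x * a"
  shows "Gi * x * a = a * sigma_mat q (Gi * x)"
proof -
  have carr: "G \<in> carrier_mat N N" "Gi \<in> carrier_mat N N"
    using G by (auto simp: inverse_pair_def)
  have sGi: "sigma_mat q Gi = Gi"
    using inverse_pair_unique[OF inverse_pair_sigma[OF q G, unfolded sG] G] .
  have ai: "a * (Gi * transpose_mat a * G) = 1\<^sub>m N"
    using isometry_inverse_pair[OF G a iso] by (simp add: inverse_pair_def)
  have "a * Gi * transpose_mat a = a * Gi * transpose_mat a * G * Gi"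
    using carr a inverse_pair_cancel_right[OF G, of "a * Gi * transpose_mat a" N] by simp
  also have "\<dots> = a * (Gi * transpose_mat a * G) * Gi"
    using carr a by (simp add: assoc_mult_mat[of _ N N _ N _ N])
  also have "\<dots> = Gi" using ai carr by simp
  finally have aGia: "a * Gi * transpose_mat a = Gi" .
  have "a * sigma_mat q (Gi * x) = a * Gi * transpose_mat a * x * a"
    using carr a x by (simp add: sigma_mat_mult[OF q, of _ N N _ N] sGi sx assoc_mult_mat[of _ N N _ N _ N])
  then show ?thesis unfolding aGia by (rule sym)
qed

lemma self_adjoint_of_gram:
  fixes G :: "'a::comm_ring_1 mat"
  assumes G: "inverse_pair N G Gi" and eG: "transpose_mat G = e \<cdot>\<^sub>m G" and e: "e * e = 1"
    and x: "x \<in> carrier_mat N N" and ex: "transpose_mat x = e \<cdot>\<^sub>m x"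
  shows "transpose_mat (Gi * x) * G = G * (Gi * x)"
proof -
  have carr: "G \<in> carrier_mat N N" "Gi \<in> carrier_mat N N"
    using G by (auto simp: inverse_pair_def)
  have "e \<cdot>\<^sub>m (transpose_mat Gi * G) = transpose_mat Gi * transpose_mat G"
    using carr by (simp add: eG mult_smult_distrib[of _ N N _ N])
  also have "\<dots> = 1\<^sub>m N"
    using carr G transpose_mult[of G N N Gi N] by (simp add: inverse_pair_def)
  finally have "transpose_mat Gi * G = e \<cdot>\<^sub>m 1\<^sub>m N"
    using e by (metis smult_smult_mat smult_one_mat)
  then have "transpose_mat (Gi * x) * G = e \<cdot>\<^sub>m (transpose_mat x * 1\<^sub>m N)"
    using carr x by (simp add: transpose_mult[of _ N N _ N] assoc_mult_mat[of _ N N _ N _ N]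
        smult_one_right_mat)
  also have "\<dots> = x"
    using x e by (simp add: ex smult_smult_mat)
  also have "\<dots> = G * (Gi * x)"
    by (rule inverse_pair_cancel_left[OF inverse_pair_sym[OF G] x, symmetric])
  finally show ?thesis .
qed

text \<open>The heart of the argument: an invertible matrix u that twisted-commutes with an invertible
  a and is self-adjoint for G has a square root y with the same two properties, namely a
  polynomial in u with coefficients in k.\<close>
lemma twisted_self_adjoint_sqrt:
  fixes q :: "'k::{alg_closed_field, field_char_0}"
  assumes q: "q \<noteq> 0" and not_root: "\<forall>m::nat. m > 0 \<longrightarrow> q ^ m \<noteq> 1"
    and a: "inverse_pair N a ai" and G: "G \<in> carrier_mat N N" and u: "inverse_pair N u ui"
    and ua: "u * a = a * sigma_mat q u" and uG: "transpose_mat u * G = G * u"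
  obtains y yi where "y * y = u" and "inverse_pair N y yi"
    and "y * a = a * sigma_mat q y" and "transpose_mat y * G = G * y"
proof -
  have uc: "u \<in> carrier_mat N N" and ac: "a \<in> carrier_mat N N"
    using u a by (auto simp: inverse_pair_def)
  obtain p where "char_poly u = map_poly fls_const p"
    using char_poly_twisted_const[OF q not_root a uc ua] .
  then obtain r where sqrt: "mat_eval N (map_poly fls_const r) u * mat_eval N (map_poly fls_const r) u = u"
    using invertible_mat_sqrt[OF fls_const_hom u] by blast
  define y where "y = mat_eval N (map_poly fls_const r) u"
  have yc: "y \<in> carrier_mat N N" unfolding y_def using uc by simp
  have "y * (y * ui) = 1\<^sub>m N"
    using sqrt u yc by (simp add: y_def inverse_pair_def assoc_mult_mat[of _ N N _ N _ N, symmetric])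
  then have "inverse_pair N y (y * ui)"
    using yc u by (intro inverse_pairI) (auto simp: inverse_pair_def)
  moreover have "y * a = a * sigma_mat q y"
    unfolding y_def by (rule mat_eval_twisted[OF q uc ac ua])
  moreover have "transpose_mat y * G = G * y"
    unfolding y_def by (rule mat_eval_self_adjoint[OF uc G uG])
  ultimately show ?thesis using that sqrt unfolding y_def by blast
qed

lemma isometry_correction:
  assumes y: "inverse_pair N y yi" and G: "G \<in> carrier_mat N N"
    and c: "(c :: 'a::comm_semiring_1 mat) \<in> carrier_mat N N"
    and gram: "transpose_mat c * G * c = G * (y * y)"
    and yG: "transpose_mat y * G = G * y"
  shows "transpose_mat (c * yi) * G * (c * yi) = G"
proof -
  have yc: "y \<in> carrier_mat N N" and yic: "yi \<in> carrier_mat N N"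
    using y by (auto simp: inverse_pair_def)
  note simps = assoc_mult_mat[of _ N N _ N _ N] transpose_mult[of _ N N _ N]
  have "transpose_mat (c * yi) * G * (c * yi) = transpose_mat yi * (transpose_mat c * G * c) * yi"
    using c yic G by (simp add: simps)
  also have "\<dots> = transpose_mat yi * (G * y) * (y * yi)"
    unfolding gram using yc yic G by (simp add: simps)
  also have "\<dots> = transpose_mat yi * (transpose_mat y * G)"
    unfolding yG using y yc yic G by (simp add: inverse_pair_def)
  also have "\<dots> = transpose_mat (y * yi) * G"
    using yc yic G by (simp add: simps)
  also have "\<dots> = G"
    using y G by (simp add: inverse_pair_def)
  finally show ?thesis .
qed

lemma q_conj_correction:
  assumes q: "q \<noteq> 0" and y: "inverse_pair N y yi" and a: "a \<in> carrier_mat N N"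
    and sc: "inverse_pair N (sigma_mat q c) d" and cc: "c \<in> carrier_mat N N"
    and ya: "y * a = a * sigma_mat q y"
  shows "inverse_pair N (sigma_mat q (c * yi)) (sigma_mat q y * d)"
    and "c * a * d = (c * yi) * a * (sigma_mat q y * d)"
proof -
  have yc: "y \<in> carrier_mat N N" and yic: "yi \<in> carrier_mat N N"
    and dc: "d \<in> carrier_mat N N"
    using y sc by (auto simp: inverse_pair_def)
  show "inverse_pair N (sigma_mat q (c * yi)) (sigma_mat q y * d)"
    using inverse_pair_mult[OF sc inverse_pair_sigma[OF q inverse_pair_sym[OF y]]]
    by (simp add: sigma_mat_mult[OF q cc yic])
  have "(c * yi) * a * (sigma_mat q y * d) = c * (yi * (y * a)) * d"
    using cc yc yic a dc by (simp add: ya assoc_mult_mat[of _ N N _ N _ N])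
  also have "\<dots> = c * a * d"
    using inverse_pair_cancel_left[OF y a] by simp
  finally show "c * a * d = (c * yi) * a * (sigma_mat q y * d)" ..
qed

lemma const_mat_carrier [simp]: "(const_mat B \<in> carrier_mat nr nc) = (B \<in> carrier_mat nr nc)"
  by (simp add: const_mat_def)

lemma const_mat_inverse_pair:
  assumes B: "(B :: 'a::field mat) \<in> carrier_mat N N" and dB: "det B \<noteq> 0"
  obtains Gi where "inverse_pair N (const_mat B) Gi"
proof (rule det_nonzero_inverse_pair)
  interpret comm_ring_hom "fls_const :: 'a \<Rightarrow> 'a fls" by (rule fls_const_hom)
  have "det (const_mat B) = fls_const (det B)" unfolding const_mat_def by simp
  then show "det (const_mat B) \<noteq> 0"
    using dB by (metis fls_const_nth fls_zero_nth)
qed (use B in simp)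

lemma const_mat_transpose_smult:
  assumes B: "B \<in> carrier_mat N N" and eB: "transpose_mat B = e \<cdot>\<^sub>m B"
  shows "transpose_mat (const_mat B) = fls_const e \<cdot>\<^sub>m const_mat B"
proof (rule eq_matI)
  fix i j assume "i < dim_row (fls_const e \<cdot>\<^sub>m const_mat B)" "j < dim_col (fls_const e \<cdot>\<^sub>m const_mat B)"
  then have ij: "i < N" "j < N" using B by auto
  have "B $$ (j, i) = e * B $$ (i, j)"
    using arg_cong[OF eB, of "\<lambda>M. M $$ (i, j)"] ij B by simp
  then show "transpose_mat (const_mat B) $$ (i, j) = (fls_const e \<cdot>\<^sub>m const_mat B) $$ (i, j)"
    using ij B unfolding const_mat_def by simp
qed (use B in \<open>auto simp: const_mat_def\<close>)

lemma conjugated_gram_inverse_pair: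
  assumes G: "inverse_pair N G Gi" and c: "inverse_pair N (c :: 'a::comm_semiring_1 mat) ci"
  shows "inverse_pair N (Gi * (transpose_mat c * G * c)) (ci * Gi * transpose_mat ci * G)"
  using inverse_pair_mult[OF inverse_pair_sym[OF G]
      inverse_pair_mult[OF inverse_pair_mult[OF inverse_pair_transpose[OF c] G] c]] G c
  by (simp add: inverse_pair_def assoc_mult_mat[of _ N N _ N _ N])

lemma q_conj_by_GL_elim:
  assumes "q_conj_by q (GL N) a b" and "a \<in> carrier_mat N N"
  obtains c ci d where "inverse_pair N c ci" and "inverse_pair N (sigma_mat q c) d"
    and "b = c * a * d"
proof -
  from assms obtain c d where "c \<in> GL N" and "inverse_pair N (sigma_mat q c) d"
    and "b = c * a * d"
    unfolding q_conj_by_def inverse_pair_def GL_def by auto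
  with GL_inverse_pair show ?thesis using that by metis
qed

lemma q_conj_by_isometryI:
  assumes "c \<in> isometry_group B" and "inverse_pair N (sigma_mat q c) d"
    and "b = c * a * d" and "a \<in> carrier_mat N N"
  shows "q_conj_by q (isometry_group B) a b"
  using assms unfolding q_conj_by_def inverse_pair_def by auto

lemma conjugated_gram_transpose:
  assumes G: "G \<in> carrier_mat N N" and c: "(c :: 'a::comm_ring_1 mat) \<in> carrier_mat N N"
    and eG: "transpose_mat G = e \<cdot>\<^sub>m G"
  shows "transpose_mat (transpose_mat c * G * c) = e \<cdot>\<^sub>m (transpose_mat c * G * c)"
  using G c
  by (simp add: eG transpose_mult[of _ N N _ N] mult_smult_distrib[of _ N N _ N]
      mult_smult_assoc_mat[of _ N N _ N] assoc_mult_mat[of _ N N _ N _ N])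

text \<open>The statement for any nondegenerate form whose Gram matrix B satisfies B^T = e B with
  e^2 = 1, i.e. symmetric (e = 1) or alternating (e = -1) forms: if isometries a, b are
  q-conjugate by some invertible c, then also by the isometry c y^-1, where y is the square root
  of u = G^-1 x, x = c^T G c, provided by twisted_self_adjoint_sqrt (G is B over k((t))).\<close>
lemma isometry_q_conj_injective:
  fixes q :: "'k::{alg_closed_field, field_char_0}"
  assumes q: "q \<noteq> 0" and not_root: "\<forall>m::nat. m > 0 \<longrightarrow> q ^ m \<noteq> 1"
    and B: "B \<in> carrier_mat N N" and dB: "det B \<noteq> 0"
    and eB: "transpose_mat B = e \<cdot>\<^sub>m B" and e: "e * e = 1"
    and aI: "a \<in> isometry_group B" and bI: "b \<in> isometry_group B"
    and qc: "q_conj_by q (GL N) a b"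
  shows "q_conj_by q (isometry_group B) a b"
proof -
  define G where "G = const_mat B"
  have Gc: "G \<in> carrier_mat N N" and sG: "sigma_mat q G = G"
    and eG: "transpose_mat G = fls_const e \<cdot>\<^sub>m G"
    unfolding G_def using B const_mat_transpose_smult[OF B eB] by auto
  obtain Gi where G: "inverse_pair N G Gi"
    using const_mat_inverse_pair[OF B dB] unfolding G_def by blast
  have a: "a \<in> carrier_mat N N" and a_iso: "transpose_mat a * G * a = G"
    and b_iso: "transpose_mat b * G * b = G"
    using aI bI B unfolding isometry_group_def G_def by auto
  obtain c ci d where c: "inverse_pair N c ci" and sc: "inverse_pair N (sigma_mat q c) d"
    and b: "b = c * a * d"
    using q_conj_by_GL_elim[OF qc a] .
  have cc: "c \<in> carrier_mat N N" and dc: "d \<in> carrier_mat N N" and d_inv: "d * sigma_mat q c = 1\<^sub>m N"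
    using c sc by (auto simp: inverse_pair_def)
  define x where "x = transpose_mat c * G * c"
  have xc: "x \<in> carrier_mat N N" unfolding x_def using cc Gc by simp
  have sx: "sigma_mat q x = transpose_mat a * x * a"
    unfolding x_def by (rule sigma_conjugated_gram[OF q Gc sG a cc dc b_iso[unfolded b] d_inv])
  obtain y yi where yy: "y * y = Gi * x" and y: "inverse_pair N y yi"
    and ya: "y * a = a * sigma_mat q y" and yG: "transpose_mat y * G = G * y"
  proof (rule twisted_self_adjoint_sqrt[OF q not_root isometry_inverse_pair[OF G a a_iso] Gc])
    show "inverse_pair N (Gi * x) (ci * Gi * transpose_mat ci * G)"
      unfolding x_def by (rule conjugated_gram_inverse_pair[OF G c])
    show "Gi * x * a = a * sigma_mat q (Gi * x)"
      by (rule twisted_of_gram[OF q G sG a a_iso xc sx])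
    show "transpose_mat (Gi * x) * G = G * (Gi * x)"
      by (rule self_adjoint_of_gram[OF G eG _ xc conjugated_gram_transpose[OF Gc cc eG, folded x_def]])
        (metis e fls_const_mult_const fls_const_1)
  qed
  have "transpose_mat c * G * c = G * (y * y)"
    unfolding yy using inverse_pair_cancel_left[OF inverse_pair_sym[OF G] xc] by (simp add: x_def)
  then have "transpose_mat (c * yi) * G * (c * yi) = G"
    by (rule isometry_correction[OF y Gc cc _ yG])
  then have "c * yi \<in> isometry_group B"
    using cc y B unfolding isometry_group_def G_def by (simp add: inverse_pair_def)
  with q_conj_correction[OF q y a sc cc ya] a show ?thesis
    unfolding b by (intro q_conj_by_isometryI) auto
qed

theorem mainTheorem14:
  fixes q :: "'k::{alg_closed_field, field_char_0}"
  assumes "q \<noteq> 0" and "\<forall>m::nat. m > 0 \<longrightarrow> q ^ m \<noteq> 1"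
  shows "(\<forall>(n::nat) (J::'k mat) a b. symplectic_form n J \<longrightarrow>
            a \<in> isometry_group J \<longrightarrow> b \<in> isometry_group J \<longrightarrow>
            q_conj_by q (GL (2*n)) a b \<longrightarrow> q_conj_by q (isometry_group J) a b)
       \<and> (\<forall>(n::nat) (S::'k mat) a b. symmetric_form n S \<longrightarrow>
            a \<in> isometry_group S \<longrightarrow> b \<in> isometry_group S \<longrightarrow>
            q_conj_by q (GL n) a b \<longrightarrow> q_conj_by q (isometry_group S) a b)"
proof (intro conjI allI impI)
  fix n :: nat and J :: "'k mat" and a b
  assume "symplectic_form n J" "a \<in> isometry_group J" "b \<in> isometry_group J"
    "q_conj_by q (GL (2*n)) a b"
  moreover have "transpose_mat J = (-1) \<cdot>\<^sub>m J" if "transpose_mat J = - J"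
    using that by (auto intro: eq_matI)
  ultimately show "q_conj_by q (isometry_group J) a b"
    using isometry_q_conj_injective[OF assms, of J "2*n" "-1"] by (auto simp: symplectic_form_def)
next
  fix n :: nat and S :: "'k mat" and a b
  assume "symmetric_form n S" "a \<in> isometry_group S" "b \<in> isometry_group S"
    "q_conj_by q (GL n) a b"
  then show "q_conj_by q (isometry_group S) a b"
    using isometry_q_conj_injective[OF assms, of S n 1] by (auto simp: symmetric_form_def)
qed

end
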